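(* Let $n,m\in\mathbb{N}$, let $f:\mathbb{F}_2^n\to\mathbb{F}_2$ be $m$-bent, and let $h(\mathbf{x})=\mathbf{x}\cdot\mathbf{y}$ for some $\mathbf{y}\in\mathbb{F}_2^n$. When the three-query algorithm $A^{(m)3,3}_n(h,f,f)$ is executed, the probability of measuring the all-zero state $\ket{0^n}$ is nonzero if $\mathbf{y}=0^n$ (i.e. $h$ is the zero function) and is zero if $\mathbf{y}\neq 0^n$ (i.e. $h$ is balanced).
   Context: $\zeta_m=e^{2\pi i/m}$, $\overline{\zeta_m}$ its conjugate; $wt$ is Hamming weight; $\mathbf{x}\cdot\mathbf{y}=\bigoplus_i x_iy_i$. $f$ is $m$-bent if $|\mathcal{H}^{(m)}_f(\boldsymbol{\omega})|=1$ for all $\boldsymbol{\omega}$, where $\mathcal{H}^{(m)}_f(\boldsymbol{\omega})=2^{-n/2}\sum_{\mathbf{x}}(-1)^{f(\mathbf{x})\oplus\mathbf{x}\cdot\boldsymbol{\omega}}\zeta_m^{wt(\mathbf{x})}$. Gates: $\mathrm{H}$ Hadamard; $\Omega_m=\frac{1}{\sqrt2}\begin{pmatrix}1&\zeta_m\\1&-\zeta_m\end{pmatrix}$; $\overline{\Omega}_m=\frac{1}{\sqrt2}\begin{pmatrix}1&\overline{\zeta_m}\\1&-\overline{\zeta_m}\end{pmatrix}$; $U_f$ is the phase oracle $\ket{\mathbf{x}}\mapsto(-1)^{f(\mathbf{x})}\ket{\mathbf{x}}$. Algorithm $A^{(m)3,3}_n(f_1,f_2,f_3)$: from $\ket{0^n}$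 apply in order $\mathrm{H}^{\otimes n}$, $U_{f_2}$, $\Omega_m^{\otimes n}$, $U_{f_1}$, $\mathrm{H}^{\otimes n}$, $U_{f_3}$, $\overline{\Omega}_m^{\otimes n}$, then measure all qubits. *)

theory Defs
  imports Complex_Main
begin

text \<open>Elements of F_2^n are bit strings: boolean lists of length n.
  A quantum state on n qubits is a map from bit strings to amplitudes.\<close>

definition bitstrings :: "nat \<Rightarrow> bool list set" where
  "bitstrings n = {x. length x = n}"

definition zeta :: "nat \<Rightarrow> complex" where
  "zeta m = cis (2 * pi / real m)"

definition dotp :: "bool list \<Rightarrow> bool list \<Rightarrow> bool" where
  "dotp x y = odd (card {i. i < length x \<and> i < length y \<and> x ! i \<and> y ! i})"

definition wt :: "bool list \<Rightarrow> nat" where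
  "wt x = length (filter id x)"

definition sgn1 :: "bool \<Rightarrow> complex" where
  "sgn1 b = (if b then -1 else 1)"

definition walsh_m :: "nat \<Rightarrow> nat \<Rightarrow> (bool list \<Rightarrow> bool) \<Rightarrow> bool list \<Rightarrow> complex" where
  "walsh_m n m f w = (1 / sqrt (2 ^ n)) *
     (\<Sum>x\<in>bitstrings n. sgn1 (f x \<noteq> dotp x w) * zeta m ^ wt x)"

definition m_bent :: "nat \<Rightarrow> nat \<Rightarrow> (bool list \<Rightarrow> bool) \<Rightarrow> bool" where
  "m_bent n m f = (\<forall>w\<in>bitstrings n. cmod (walsh_m n m f w) = 1)"

text \<open>Single-qubit gates as matrices: G out in.\<close>

definition hadamard :: "bool \<Rightarrow> bool \<Rightarrow> complex" where
  "hadamard a b = (if a \<and> b then -1 else 1) / sqrt 2"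

definition omega :: "nat \<Rightarrow> bool \<Rightarrow> bool \<Rightarrow> complex" where
  "omega m a b = (if b then (if a then - zeta m else zeta m) else 1) / sqrt 2"

definition omega_bar :: "nat \<Rightarrow> bool \<Rightarrow> bool \<Rightarrow> complex" where
  "omega_bar m a b = (if b then (if a then - cnj (zeta m) else cnj (zeta m)) else 1) / sqrt 2"

definition tensor_gate :: "nat \<Rightarrow> (bool \<Rightarrow> bool \<Rightarrow> complex) \<Rightarrow>
    (bool list \<Rightarrow> complex) \<Rightarrow> bool list \<Rightarrow> complex" where
  "tensor_gate n G psi x = (\<Sum>y\<in>bitstrings n. (\<Prod>i<n. G (x ! i) (y ! i)) * psi y)"

definition phase_oracle :: "(bool list \<Rightarrow> bool) \<Rightarrow> (bool list \<Rightarrow> complex) \<Rightarrow> bool list \<Rightarrow> complex" where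
  "phase_oracle f psi x = sgn1 (f x) * psi x"

definition zero_state :: "nat \<Rightarrow> bool list \<Rightarrow> complex" where
  "zero_state n x = (if x = replicate n False then 1 else 0)"

definition alg33_state :: "nat \<Rightarrow> nat \<Rightarrow> (bool list \<Rightarrow> bool) \<Rightarrow> (bool list \<Rightarrow> bool) \<Rightarrow>
    (bool list \<Rightarrow> bool) \<Rightarrow> bool list \<Rightarrow> complex" where
  "alg33_state m n f1 f2 f3 =
     tensor_gate n (omega_bar m)
      (phase_oracle f3
       (tensor_gate n hadamard
        (phase_oracle f1
         (tensor_gate n (omega m)
          (phase_oracle f2
           (tensor_gate n hadamard (zero_state n)))))))"

definition alg33_prob :: "nat \<Rightarrow> nat \<Rightarrow> (bool list \<Rightarrow> bool) \<Rightarrow> (bool list \<Rightarrow> bool) \<Rightarrow>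
    (bool list \<Rightarrow> bool) \<Rightarrow> bool list \<Rightarrow> real" where
  "alg33_prob m n f1 f2 f3 z = (cmod (alg33_state m n f1 f2 f3 z))\<^sup>2"

end

(*
  Following the amplitudes gate by gate: H, U_f and Omega_m turn the zero state into the
  m-Walsh spectrum w |-> H_f(w) / sqrt(2^n).  The remaining layers U_h, H, U_f and conj Omega_m,
  read off at 0^n, pair this spectrum with its own conjugate, so for every h the amplitude of
  0^n is 2^-n * sum_w (-1)^h(w) |H_f(w)|^2.  For m-bent f every |H_f(w)|^2 is 1, and for
  h(w) = w.y what remains is the character sum 2^-n * sum_w (-1)^(w.y), which is 1 for y = 0
  and vanishes otherwise, since flipping a bit j with y_j = 1 changes the sign of every term.
*)
theory Submission
  imports Defs
begin

lemma sgn1_xor: "sgn1 (a \<noteq> b) = sgn1 a * sgn1 b"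
  by (simp add: sgn1_def)

lemma sgn1_odd: "sgn1 (odd k) = (-1) ^ k"
  by (simp add: sgn1_def)

lemma sgn1_simps [simp]: "sgn1 False = 1" "sgn1 True = -1"
  by (simp_all add: sgn1_def)

lemma cnj_sgn1 [simp]: "cnj (sgn1 b) = sgn1 b"
  by (simp add: sgn1_def)

lemma mem_bitstrings [simp]: "x \<in> bitstrings n \<longleftrightarrow> length x = n"
  by (simp add: bitstrings_def)

lemma finite_bitstrings [simp]: "finite (bitstrings n)"
  using finite_lists_length_eq[of "UNIV :: bool set" n] by (simp add: bitstrings_def)

lemma card_bitstrings: "card (bitstrings n) = 2 ^ n"
  using card_lists_length_eq[of "UNIV :: bool set" n] by (simp add: bitstrings_def)

lemma sgn1_dotp:
  assumes "length x = n" "length y = n"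
  shows "sgn1 (dotp x y) = (\<Prod>i<n. sgn1 (x ! i \<and> y ! i))"
proof -
  have "{i. i < length x \<and> i < length y \<and> x ! i \<and> y ! i} = {i \<in> {..<n}. x ! i \<and> y ! i}"
    using assms by auto
  moreover have "card {i \<in> {..<n}. x ! i \<and> y ! i} = (\<Sum>i<n. if x ! i \<and> y ! i then 1 else 0)"
    unfolding card_eq_sum by (rule sum.inter_filter) simp
  ultimately have "sgn1 (dotp x y) = (-1) ^ (\<Sum>i<n. if x ! i \<and> y ! i then 1 else 0)"
    unfolding dotp_def sgn1_odd by simp
  also have "\<dots> = (\<Prod>i<n. sgn1 (x ! i \<and> y ! i))"
    by (simp add: power_sum sgn1_def if_distrib cong: if_cong)
  finally show ?thesis .
qed

lemma dotp_commute: "dotp x y = dotp y x"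
  unfolding dotp_def by (simp add: conj_commute conj_left_commute)

lemma dotp_replicate_False [simp]: "dotp x (replicate n False) = False"
  by (simp add: dotp_def cong: conj_cong)

lemma replicate_False_dotp [simp]: "dotp (replicate n False) x = False"
  by (simp add: dotp_commute)

lemma sgn1_dotp_flip_bit:
  assumes "length w = n" "length y = n" "j < n"
  shows "sgn1 (dotp (w[j := \<not> w ! j]) y) = sgn1 (dotp w y) * sgn1 (y ! j)"
proof -
  have "sgn1 (w[j := \<not> w ! j] ! i \<and> y ! i) = sgn1 (w ! i \<and> y ! i) * sgn1 (i = j \<and> y ! i)"
    if "i < n" for i
    using that assms by (auto simp: sgn1_def)
  then have "sgn1 (dotp (w[j := \<not> w ! j]) y)
      = sgn1 (dotp w y) * (\<Prod>i<n. sgn1 (i = j \<and> y ! i))"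
    using assms by (simp add: sgn1_dotp prod.distrib)
  also have "(\<Prod>i<n. sgn1 (i = j \<and> y ! i)) = (\<Prod>i<n. if i = j then sgn1 (y ! j) else 1)"
    by (rule prod.cong) (auto simp: sgn1_def)
  also have "\<dots> = sgn1 (y ! j)"
    using assms(3) by (simp add: prod.delta)
  finally show ?thesis .
qed

lemma sum_sgn1_dotp:
  assumes "length y = n"
  shows "(\<Sum>w\<in>bitstrings n. sgn1 (dotp w y)) = (if y = replicate n False then 2 ^ n else 0)"
proof (cases "y = replicate n False")
  case True
  then show ?thesis by (simp add: card_bitstrings)
next
  case False
  then obtain j where j: "j < n" "y ! j"
    using assms by (auto simp: list_eq_iff_nth_eq)
  let ?S = "\<Sum>w\<in>bitstrings n. sgn1 (dotp w y)"
  let ?flip = "\<lambda>w :: bool list. w[j := \<not> w ! j]"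
  have "?S = (\<Sum>w\<in>bitstrings n. - sgn1 (dotp w y))"
  proof (rule sum.reindex_bij_witness[of _ ?flip ?flip])
    fix w
    assume "w \<in> bitstrings n"
    then show "- sgn1 (dotp (?flip w) y) = sgn1 (dotp w y)"
      using sgn1_dotp_flip_bit[of w n y j] j assms by (simp add: sgn1_def)
  qed (use j in auto)
  then show ?thesis
    using False by (simp add: sum_negf)
qed

lemma wt_eq_sum: "wt y = (\<Sum>i<length y. if y ! i then 1 else 0)"
  unfolding wt_def by (induction y) (auto simp: sum.lessThan_Suc_shift simp del: sum.lessThan_Suc)

definition hadamard_phase :: "complex \<Rightarrow> bool \<Rightarrow> bool \<Rightarrow> complex" where
  "hadamard_phase c a b = (if b then c else 1) * sgn1 (a \<and> b) / sqrt 2"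

lemma hadamard_eq_hadamard_phase: "hadamard = hadamard_phase 1"
  by (auto simp: fun_eq_iff hadamard_def hadamard_phase_def sgn1_def)

lemma omega_eq_hadamard_phase: "omega m = hadamard_phase (zeta m)"
  by (auto simp: fun_eq_iff omega_def hadamard_phase_def sgn1_def)

lemma omega_bar_eq_hadamard_phase: "omega_bar m = hadamard_phase (cnj (zeta m))"
  by (auto simp: fun_eq_iff omega_bar_def hadamard_phase_def sgn1_def)

lemma prod_hadamard_phase:
  assumes "length x = n" "length y = n"
  shows "(\<Prod>i<n. hadamard_phase c (x ! i) (y ! i)) = c ^ wt y * sgn1 (dotp x y) / of_real (sqrt 2) ^ n"
proof -
  have "(\<Prod>i<n. hadamard_phase c (x ! i) (y ! i))
      = (\<Prod>i<n. if y ! i then c else 1) * (\<Prod>i<n. sgn1 (x ! i \<and> y ! i)) / of_real (sqrt 2) ^ n"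
    by (simp add: hadamard_phase_def prod_dividef flip: prod.distrib)
  also have "(\<Prod>i<n. if y ! i then c else 1) = c ^ wt y"
    unfolding wt_eq_sum power_sum assms(2) by (rule prod.cong) auto
  finally show ?thesis
    using assms by (simp add: sgn1_dotp)
qed

lemma tensor_gate_hadamard_phase:
  assumes "length x = n"
  shows "tensor_gate n (hadamard_phase c) psi x
    = (\<Sum>y\<in>bitstrings n. c ^ wt y * sgn1 (dotp x y) * psi y) / of_real (sqrt 2) ^ n"
  unfolding tensor_gate_def sum_divide_distrib
  by (rule sum.cong) (simp_all add: assms prod_hadamard_phase)

lemma walsh_m_eq:
  "walsh_m n m f w
    = (\<Sum>x\<in>bitstrings n. sgn1 (f x) * sgn1 (dotp x w) * zeta m ^ wt x) / of_real (sqrt 2) ^ n"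
  unfolding walsh_m_def sgn1_xor by (simp add: real_sqrt_power)

lemma cnj_walsh_m:
  "cnj (walsh_m n m f w)
    = (\<Sum>x\<in>bitstrings n. sgn1 (f x) * sgn1 (dotp x w) * cnj (zeta m) ^ wt x) / of_real (sqrt 2) ^ n"
  by (simp add: walsh_m_eq cnj_sum)

lemma sum_mult_zero_state: "(\<Sum>y\<in>bitstrings n. g y * zero_state n y) = g (replicate n False)"
proof -
  have "(\<Sum>y\<in>bitstrings n. g y * zero_state n y)
      = (\<Sum>y\<in>bitstrings n. if y = replicate n False then g y else 0)"
    by (rule sum.cong) (auto simp: zero_state_def)
  then show ?thesis
    by (simp add: sum.delta)
qed

lemma tensor_gate_hadamard_zero_state:
  assumes "length x = n"
  shows "tensor_gate n hadamard (zero_state n) x = 1 / of_real (sqrt 2) ^ n"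
  by (simp add: hadamard_eq_hadamard_phase tensor_gate_hadamard_phase assms sum_mult_zero_state)

lemma omega_state_eq_walsh_m:
  assumes "length w = n"
  shows "tensor_gate n (omega m) (phase_oracle f (tensor_gate n hadamard (zero_state n))) w
    = walsh_m n m f w / of_real (sqrt 2) ^ n"
proof -
  have "(\<Sum>x\<in>bitstrings n. zeta m ^ wt x * sgn1 (dotp w x)
          * phase_oracle f (tensor_gate n hadamard (zero_state n)) x)
      = (\<Sum>x\<in>bitstrings n. sgn1 (f x) * sgn1 (dotp x w) * zeta m ^ wt x) / of_real (sqrt 2) ^ n"
    unfolding sum_divide_distrib
    by (rule sum.cong) (simp_all add: phase_oracle_def tensor_gate_hadamard_zero_state dotp_commute)
  then show ?thesis
    by (simp add: omega_eq_hadamard_phase tensor_gate_hadamard_phase[OF assms] walsh_m_eq)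
qed

lemma hadamard_oracle_omega_state_eq:
  assumes "length z = n"
  shows "tensor_gate n hadamard (phase_oracle h
      (tensor_gate n (omega m) (phase_oracle f (tensor_gate n hadamard (zero_state n))))) z
    = (\<Sum>w\<in>bitstrings n. sgn1 (dotp z w) * sgn1 (h w) * walsh_m n m f w) / (of_real (sqrt 2) ^ n)\<^sup>2"
proof -
  have "(\<Sum>w\<in>bitstrings n. sgn1 (dotp z w) * phase_oracle h
        (tensor_gate n (omega m) (phase_oracle f (tensor_gate n hadamard (zero_state n)))) w)
      = (\<Sum>w\<in>bitstrings n. sgn1 (dotp z w) * sgn1 (h w) * walsh_m n m f w) / of_real (sqrt 2) ^ n"
    unfolding sum_divide_distrib
    by (rule sum.cong) (simp_all add: phase_oracle_def omega_state_eq_walsh_m)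
  then show ?thesis
    unfolding tensor_gate_hadamard_phase[OF assms, of 1, folded hadamard_eq_hadamard_phase]
    by (simp add: power2_eq_square)
qed

lemma sqrt2_power_square: "(of_real (sqrt 2) ^ n :: complex)\<^sup>2 = 2 ^ n"
proof -
  have "(of_real (sqrt 2) :: complex)\<^sup>2 = 2"
    by (simp flip: of_real_power)
  then show ?thesis
    by (metis power_mult mult.commute)
qed

lemma alg33_state_zero:
  "alg33_state m n h f f (replicate n False)
    = (\<Sum>w\<in>bitstrings n. sgn1 (h w) * (cmod (walsh_m n m f w))\<^sup>2) / 2 ^ n"
proof -
  let ?W = "walsh_m n m f"
  let ?r = "of_real (sqrt 2) ^ n :: complex"
  let ?c = "\<lambda>z w. sgn1 (f z) * sgn1 (dotp z w) * cnj (zeta m) ^ wt z"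
  define psi where "psi = tensor_gate n hadamard (phase_oracle h
      (tensor_gate n (omega m) (phase_oracle f (tensor_gate n hadamard (zero_state n)))))"
  have "alg33_state m n h f f (replicate n False)
      = (\<Sum>z\<in>bitstrings n. cnj (zeta m) ^ wt z * sgn1 (f z) * psi z) / ?r"
    by (simp add: alg33_state_def psi_def[symmetric] omega_bar_eq_hadamard_phase
        tensor_gate_hadamard_phase phase_oracle_def[of f] mult.assoc)
  also have "\<dots> = (\<Sum>z\<in>bitstrings n. \<Sum>w\<in>bitstrings n. sgn1 (h w) * ?W w * ?c z w) / ?r ^ 3"
  proof -
    have "(\<Sum>z\<in>bitstrings n. cnj (zeta m) ^ wt z * sgn1 (f z) * psi z)
        = (\<Sum>z\<in>bitstrings n. \<Sum>w\<in>bitstrings n. sgn1 (h w) * ?W w * ?c z w) / ?r\<^sup>2"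
      unfolding sum_divide_distrib psi_def
      by (rule sum.cong)
        (simp_all add: hadamard_oracle_omega_state_eq sum_distrib_left sum_divide_distrib mult_ac)
    then show ?thesis
      by (simp add: power2_eq_square power3_eq_cube mult_ac)
  qed
  also have "\<dots> = (\<Sum>w\<in>bitstrings n. sgn1 (h w) * ?W w * (\<Sum>z\<in>bitstrings n. ?c z w)) / ?r ^ 3"
    by (subst sum.swap) (simp only: sum_distrib_left)
  also have "\<dots> = ?r * (\<Sum>w\<in>bitstrings n. sgn1 (h w) * (?W w * cnj (?W w))) / ?r ^ 3"
  proof -
    have "(\<Sum>z\<in>bitstrings n. ?c z w) = ?r * cnj (?W w)" for w
      by (simp add: cnj_walsh_m)
    then show ?thesis
      by (simp add: sum_distrib_left mult_ac)
  qed
  also have "\<dots> = (\<Sum>w\<in>bitstrings n. sgn1 (h w) * (?W w * cnj (?W w))) / ?r\<^sup>2"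
    by (simp add: power2_eq_square power3_eq_cube)
  also have "\<dots> = (\<Sum>w\<in>bitstrings n. sgn1 (h w) * (cmod (?W w))\<^sup>2) / 2 ^ n"
    by (simp add: sqrt2_power_square flip: complex_norm_square)
  finally show ?thesis .
qed

lemma alg33_prob_m_bent_linear:
  assumes "m_bent n m f" "length y = n"
  shows "alg33_prob m n (\<lambda>x. dotp x y) f f (replicate n False)
    = (if y = replicate n False then 1 else 0)"
proof -
  have "alg33_state m n (\<lambda>x. dotp x y) f f (replicate n False)
      = (\<Sum>w\<in>bitstrings n. sgn1 (dotp w y)) / 2 ^ n"
    unfolding alg33_state_zero
    by (rule arg_cong[where f="\<lambda>x. x / 2 ^ n"], rule sum.cong)
      (use assms(1) in \<open>simp_all add: m_bent_def\<close>)
  then show ?thesis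
    by (simp add: alg33_prob_def sum_sgn1_dotp[OF assms(2)])
qed

theorem corollary3:
  fixes n m :: nat and f :: "bool list \<Rightarrow> bool" and y :: "bool list"
  assumes "0 < m" and "m_bent n m f" and "length y = n"
  shows "(y = replicate n False \<longrightarrow>
            alg33_prob m n (\<lambda>x. dotp x y) f f (replicate n False) \<noteq> 0) \<and>
         (y \<noteq> replicate n False \<longrightarrow>
            alg33_prob m n (\<lambda>x. dotp x y) f f (replicate n False) = 0)"
  unfolding alg33_prob_m_bent_linear[OF assms(2,3)] by simp

end
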